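(* Let $q\geq r$ be positive integers with $r>\frac{2q}{3}$. Then $F_{q,r}(n)=G_{q,r}(n)$ for every positive integer $n$.
   Context: $[n]=\{1,\dots,n\}$. For $x,y\in\mathbb{R}^q$, write $x<_r y$ if there are at least $r$ coordinates $i\in[q]$ with $x_i<y_i$. $F_{q,r}(n)$ is the maximum $N$ such that there exist $x_1,\dots,x_N\in[n]^q$ with $x_a<_r x_b$ for all $1\leq a<b\leq N$. $G_{q,r}(n)$ is the maximum size of a set $S\subseteq[n]^q$ such that for all distinct $x,y\in S$, either $x<_r y$ or $y<_r x$. *)

theory Defs
  imports Complex_Main
begin

text \<open>Points of [n]^q are lists of length q with entries in {1..n};
  coordinate i of [q] corresponds to list index i-1.\<close>

definition cube :: "nat \<Rightarrow> nat \<Rightarrow> nat list set" where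
  "cube n q = {xs. length xs = q \<and> set xs \<subseteq> {1..n}}"

definition less_r :: "nat \<Rightarrow> nat \<Rightarrow> nat list \<Rightarrow> nat list \<Rightarrow> bool" where
  "less_r q r x y \<longleftrightarrow> r \<le> card {i. i < q \<and> x ! i < y ! i}"

definition F :: "nat \<Rightarrow> nat \<Rightarrow> nat \<Rightarrow> nat" where
  "F q r n = Max {N. \<exists>x :: nat \<Rightarrow> nat list.
      (\<forall>a \<in> {1..N}. x a \<in> cube n q) \<and>
      (\<forall>a \<in> {1..N}. \<forall>b \<in> {1..N}. a < b \<longrightarrow> less_r q r (x a) (x b))}"

definition G :: "nat \<Rightarrow> nat \<Rightarrow> nat \<Rightarrow> nat" where
  "G q r n = Max {card S | S. S \<subseteq> cube n q \<and>
      (\<forall>x \<in> S. \<forall>y \<in> S. x \<noteq> y \<longrightarrow> less_r q r x y \<or> less_r q r y x)}"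

end

theory Submission
  imports Defs
begin

text \<open>A cycle x <_r y <_r x or x <_r y <_r z <_r x is impossible when r > q/2, resp. r > 2q/3:
  no coordinate can increase along every step of a cycle, so a cycle of length k has at most
  (k - 1) q increasing coordinate positions in total, but at least k r.  Hence for r > 2q/3 the
  relation <_r is a strict order on every set S in which any two distinct points are comparable,
  and listing S in increasing order gives a chain of length |S|.  Conversely every chain
  is such a set, since r > 0 makes its points distinct.\<close>

lemma card_add3_le_if_Int_empty:
  assumes "finite U" "A \<subseteq> U" "B \<subseteq> U" "C \<subseteq> U" "A \<inter> B \<inter> C = {}"
  shows "card A + card B + card C \<le> 2 * card U"
proof -
  have fin: "finite A" "finite B" "finite C" "finite (A \<inter> B)"
    using assms rev_finite_subset by blast+
  have "card A + card B = card (A \<union> B) + card (A \<inter> B)"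
    using card_Un_Int fin by blast
  moreover have "card (A \<inter> B) + card C = card (A \<inter> B \<union> C) + card (A \<inter> B \<inter> C)"
    using card_Un_Int fin by blast
  moreover have "card (A \<union> B) \<le> card U" "card (A \<inter> B \<union> C) \<le> card U"
    using assms by (auto intro: card_mono)
  ultimately show ?thesis
    using assms(5) by simp
qed

lemma less_r_irrefl: "0 < r \<Longrightarrow> \<not> less_r q r x x"
  unfolding less_r_def by simp

lemma less_r_asym:
  assumes "q < 2 * r" "less_r q r x y"
  shows "\<not> less_r q r y x"
proof
  assume "less_r q r y x"
  have "card {i. i < q \<and> x ! i < y ! i} + card {i. i < q \<and> y ! i < x ! i}
      = card ({i. i < q \<and> x ! i < y ! i} \<union> {i. i < q \<and> y ! i < x ! i})"
    by (rule card_Un_disjoint[symmetric]) auto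
  also have "\<dots> \<le> card {..<q}"
    by (rule card_mono) auto
  finally show False
    using assms \<open>less_r q r y x\<close> unfolding less_r_def by simp
qed

lemma less_r_no_3cycle:
  assumes "2 * q < 3 * r" "less_r q r x y" "less_r q r y z"
  shows "\<not> less_r q r z x"
proof
  assume "less_r q r z x"
  have "card {i. i < q \<and> x ! i < y ! i} + card {i. i < q \<and> y ! i < z ! i}
      + card {i. i < q \<and> z ! i < x ! i} \<le> 2 * card {..<q}"
    by (rule card_add3_le_if_Int_empty) auto
  then show False
    using assms \<open>less_r q r z x\<close> unfolding less_r_def by simp
qed

definition r_chain :: "nat \<Rightarrow> nat \<Rightarrow> nat \<Rightarrow> (nat \<Rightarrow> nat list) \<Rightarrow> bool" where
  "r_chain q r N x \<longleftrightarrow> (\<forall>a \<in> {1..N}. \<forall>b \<in> {1..N}. a < b \<longrightarrow> less_r q r (x a) (x b))"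

definition r_tournament :: "nat \<Rightarrow> nat \<Rightarrow> nat list set \<Rightarrow> bool" where
  "r_tournament q r S \<longleftrightarrow> (\<forall>x \<in> S. \<forall>y \<in> S. x \<noteq> y \<longrightarrow> less_r q r x y \<or> less_r q r y x)"

lemma less_r_trans_on_tournament:
  assumes "2 * q < 3 * r" "r_tournament q r S" "x \<in> S" "z \<in> S"
    and "less_r q r x y" "less_r q r y z"
  shows "less_r q r x z"
proof (cases "x = z")
  case True
  have "q < 2 * r"
    using assms(1) by linarith
  then show ?thesis
    using True assms(5,6) less_r_asym by blast
next
  case False
  then show ?thesis
    using assms less_r_no_3cycle unfolding r_tournament_def by blast
qed

text \<open>Position a of the enumeration is the element with exactly a - 1 predecessors.\<close>

lemma ex_increasing_enumeration:
  assumes fin: "finite S"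
    and irrefl: "\<And>x. x \<in> S \<Longrightarrow> \<not> R x x"
    and trans: "\<And>x y z. x \<in> S \<Longrightarrow> y \<in> S \<Longrightarrow> z \<in> S \<Longrightarrow> R x y \<Longrightarrow> R y z \<Longrightarrow> R x z"
    and total: "\<And>x y. x \<in> S \<Longrightarrow> y \<in> S \<Longrightarrow> x \<noteq> y \<Longrightarrow> R x y \<or> R y x"
  obtains f where "\<And>a. a \<in> {1..card S} \<Longrightarrow> f a \<in> S"
    and "\<And>a b. a \<in> {1..card S} \<Longrightarrow> b \<in> {1..card S} \<Longrightarrow> a < b \<Longrightarrow> R (f a) (f b)"
proof -
  define rank where "rank x = card {y \<in> S. R y x}" for x
  have rank_less: "rank x < rank y" if "x \<in> S" "y \<in> S" "R x y" for x y
  proof -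
    have "{z \<in> S. R z x} \<subset> {z \<in> S. R z y}"
      using that trans irrefl by blast
    then show ?thesis
      unfolding rank_def using fin by (simp add: psubset_card_mono)
  qed
  have "inj_on rank S"
  proof (rule inj_onI)
    fix x y assume "x \<in> S" "y \<in> S" "rank x = rank y"
    then show "x = y"
      using total[of x y] rank_less[of x y] rank_less[of y x] by auto
  qed
  moreover have "rank ` S \<subseteq> {..<card S}"
  proof -
    have "{z \<in> S. R z x} \<subset> S" if "x \<in> S" for x
      using that irrefl by blast
    then show ?thesis
      unfolding rank_def using fin by (auto simp: psubset_card_mono)
  qed
  ultimately have rank_image: "rank ` S = {..<card S}"
    by (simp add: card_image card_subset_eq)
  define f where "f a = inv_into S rank (a - 1)" for a
  have f_in: "f a \<in> S" and rank_f: "rank (f a) = a - 1" if "a \<in> {1..card S}" for a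
    using that rank_image unfolding f_def
    by (auto simp: inv_into_into f_inv_into_f)
  show ?thesis
  proof (rule that)
    show "f a \<in> S" if "a \<in> {1..card S}" for a
      using that f_in by blast
    show "R (f a) (f b)" if ab: "a \<in> {1..card S}" "b \<in> {1..card S}" "a < b" for a b
    proof (rule ccontr)
      assume "\<not> R (f a) (f b)"
      have "rank (f a) < rank (f b)"
        using rank_f ab by auto
      then have "f a \<noteq> f b"
        by auto
      then have "R (f b) (f a)"
        using total f_in ab \<open>\<not> R (f a) (f b)\<close> by blast
      then have "rank (f b) < rank (f a)"
        using rank_less f_in ab by blast
      with \<open>rank (f a) < rank (f b)\<close> show False
        by simp
    qed
  qed
qed

lemma r_chain_image_is_r_tournament:
  assumes "0 < r" "r_chain q r N x"
  shows "r_tournament q r (x ` {1..N})" and "card (x ` {1..N}) = N"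
proof -
  have ordered: "less_r q r (x a) (x b) \<or> less_r q r (x b) (x a)"
    if "a \<in> {1..N}" "b \<in> {1..N}" "a \<noteq> b" for a b
    using assms(2) that unfolding r_chain_def by (cases "a < b") auto
  then show "r_tournament q r (x ` {1..N})"
    unfolding r_tournament_def by blast
  have "inj_on x {1..N}"
  proof (rule inj_onI)
    fix a b assume "a \<in> {1..N}" "b \<in> {1..N}" "x a = x b"
    then show "a = b"
      using ordered[of a b] less_r_irrefl[OF assms(1)] by auto
  qed
  then show "card (x ` {1..N}) = N"
    by (simp add: card_image)
qed

lemma r_chain_enumerating_tournament:
  assumes "0 < r" "2 * q < 3 * r" "finite S" "r_tournament q r S"
  obtains x where "\<And>a. a \<in> {1..card S} \<Longrightarrow> x a \<in> S" and "r_chain q r (card S) x"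
proof -
  have "\<not> less_r q r x x" for x
    using assms(1) by (rule less_r_irrefl)
  moreover have "less_r q r x z"
    if "x \<in> S" "z \<in> S" "less_r q r x y" "less_r q r y z" for x y z
    using assms(2,4) that by (rule less_r_trans_on_tournament)
  moreover have "less_r q r x y \<or> less_r q r y x" if "x \<in> S" "y \<in> S" "x \<noteq> y" for x y
    using assms(4) that unfolding r_tournament_def by blast
  ultimately obtain x where "\<And>a. a \<in> {1..card S} \<Longrightarrow> x a \<in> S"
    and "\<And>a b. a \<in> {1..card S} \<Longrightarrow> b \<in> {1..card S} \<Longrightarrow> a < b \<Longrightarrow> less_r q r (x a) (x b)"
    using ex_increasing_enumeration[of S "less_r q r"] assms(3) by blast
  then show ?thesis
    using that unfolding r_chain_def by blast
qed

lemma finite_cube: "finite (cube n q)"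
proof -
  have "cube n q = {xs. set xs \<subseteq> {1..n} \<and> length xs = q}"
    unfolding cube_def by auto
  then show ?thesis
    using finite_lists_length_eq[of "{1..n}" q] by simp
qed

theorem proposition1p3:
  fixes q r n :: nat
  assumes "0 < r" and "r \<le> q" and "real r > 2 * real q / 3" and "0 < n"
  shows "F q r n = G q r n"
proof -
  have r: "2 * q < 3 * r"
    using assms(3) by linarith
  have "{N. \<exists>x. (\<forall>a \<in> {1..N}. x a \<in> cube n q) \<and> r_chain q r N x}
      = {card S | S. S \<subseteq> cube n q \<and> r_tournament q r S}"
  proof (intro equalityI subsetI)
    fix N assume "N \<in> {N. \<exists>x. (\<forall>a \<in> {1..N}. x a \<in> cube n q) \<and> r_chain q r N x}"
    then obtain x where "\<forall>a \<in> {1..N}. x a \<in> cube n q" "r_chain q r N x"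
      by blast
    then have "x ` {1..N} \<subseteq> cube n q" "r_tournament q r (x ` {1..N})" "card (x ` {1..N}) = N"
      using r_chain_image_is_r_tournament[OF assms(1)] by auto
    then show "N \<in> {card S | S. S \<subseteq> cube n q \<and> r_tournament q r S}"
      by (intro CollectI exI[of _ "x ` {1..N}"]) simp
  next
    fix N assume "N \<in> {card S | S. S \<subseteq> cube n q \<and> r_tournament q r S}"
    then obtain S where S: "N = card S" "S \<subseteq> cube n q" "r_tournament q r S"
      by blast
    have "finite S"
      using S(2) finite_cube rev_finite_subset by blast
    then obtain x where "\<And>a. a \<in> {1..N} \<Longrightarrow> x a \<in> S" "r_chain q r N x"
      using r_chain_enumerating_tournament[OF assms(1) r] S by blast
    then show "N \<in> {N. \<exists>x. (\<forall>a \<in> {1..N}. x a \<in> cube n q) \<and> r_chain q r N x}"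
      using S(2) by blast
  qed
  then show ?thesis
    unfolding F_def G_def r_chain_def r_tournament_def by simp
qed

end
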